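(* Let $Q\in\mathbb{R}^{l\times l}$ be symmetric, $S\in\mathbb{R}^{l\times m}$, and $R\in\mathbb{R}^{m\times m}$ symmetric positive semi-definite with symmetric PSD square root $\sqrt R$. Let $l:\mathbb{R}^n\to\mathbb{R}^m$ be a map and $V:\mathbb{R}^n\to\mathbb{R}_{\ge0}$ differentiable with $\nabla V(x)\neq0$ for all $x$. For maps $f:\mathbb{R}^n\to\mathbb{R}^n$, $g:\mathbb{R}^n\to\mathbb{R}^{n\times m}$, $h:\mathbb{R}^n\to\mathbb{R}^l$ define $\mathcal{P}_{l,V}(f,g,h)=(f_{\mathbf d},g_{\mathbf d},h_{\mathbf d})$ by $$f_{\mathbf d}=P^{\mathtt C}_{\nabla V}f+\frac{h^{\mathrm T}Qh-\|l\|^2}{\|\nabla V\|^2}\nabla V,\quad g_{\mathbf d}=P^{\mathtt C}_{\nabla V}g+\frac{2}{\|\nabla V\|^2}\nabla V\big(h^{\mathrm T}S-l^{\mathrm T}\sqrt R\big),\quad h_{\mathbf d}=h$$ (all evaluated pointwise at $x$). Then: (a) $\mathcal P_{l,V}\circ\mathcal P_{l,V}=\mathcal P_{l,V}$; (b) for every $(f,g,h)$, the projected triple satisfies, for all $x$, $\nabla V^{\mathrm T}f_{\mathbf d}=h^{\mathrm T}Qh-\|l\|^2$ and $\tfrac12\nabla V^{\mathrm T}g_{\mathbf d}=h^{\mathrm T}S-l^{\mathrm T}\sqrt R$; consequently the system $\dot x=f_{\mathbf d}(x)+g_{\mathbf d}(x)u$, $y=h_{\mathbf d}(x)$ is dissipative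 with storage function $V$, i.e. for every input $u$ and corresponding solution, $V(x(t_1))-V(x(t_0))\le\int_{t_0}^{t_1}w(u(s),y(s))\,ds$ for all $t_0\le t_1$; (c) conversely, if a triple $(f,g,h)$ satisfies, for all $x$, $\nabla V^{\mathrm T}f=h^{\mathrm T}Qh-\|\lambda\|^2$, $\tfrac12\nabla V^{\mathrm T}g=h^{\mathrm T}S-\lambda^{\mathrm T}W$ and $W^{\mathrm T}W=R$ for some maps $\lambda:\mathbb{R}^n\to\mathbb{R}^m$, $W:\mathbb{R}^n\to\mathbb{R}^{m\times m}$, then there is $\tilde l:\mathbb{R}^n\to\mathbb{R}^m$ with $(f,g,h)=\mathcal P_{\tilde l,V}(f,g,h)$.
   Context: Input-output system (no direct path): $\dot x=f(x)+g(x)u$, $y=h(x)$, $x(t)\in\mathbb{R}^n$, $u(t)\in\mathbb{R}^m$, $y(t)\in\mathbb{R}^l$. Supply rate $w(u,y)=y^{\mathrm T}Qy+2y^{\mathrm T}Su+u^{\mathrm T}Ru$. $P^{\mathtt C}_{\nabla V}:=I_n-\frac{1}{\|\nabla V\|^2}\nabla V\nabla V^{\mathrm T}$, the orthogonal projection onto the complement of $\mathrm{span}\{\nabla V(x)\}$; $\nabla V$ is the gradient as a column vector. *)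

theory Defs
  imports "HOL-Analysis.Analysis"
begin

text \<open>Matrices in R^{p x q} are rendered as real^'q^'p (rows indexed by 'p).\<close>

definition outer_prod :: "real^'n \<Rightarrow> real^'m \<Rightarrow> real^'m^'n" where
  "outer_prod a b = (\<chi> i j. a $ i * b $ j)"

definition psd_mat :: "real^'m^'m \<Rightarrow> bool" where
  "psd_mat A \<longleftrightarrow> (\<forall>v. 0 \<le> v \<bullet> (A *v v))"

definition proj_compl :: "real^'n \<Rightarrow> real^'n^'n" where
  "proj_compl a = mat 1 - (1 / (norm a)\<^sup>2) *\<^sub>R outer_prod a a"

definition supply_rate :: "real^'l^'l \<Rightarrow> real^'m^'l \<Rightarrow> real^'m^'m \<Rightarrow> real^'m \<Rightarrow> real^'l \<Rightarrow> real" where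
  "supply_rate Q S R u y = y \<bullet> (Q *v y) + 2 * (y \<bullet> (S *v u)) + u \<bullet> (R *v u)"

definition proj_PlV ::
  "real^'l^'l \<Rightarrow> real^'m^'l \<Rightarrow> real^'m^'m \<Rightarrow> (real^'n \<Rightarrow> real^'m) \<Rightarrow> (real^'n \<Rightarrow> real^'n)
   \<Rightarrow> (real^'n \<Rightarrow> real^'n) \<times> (real^'n \<Rightarrow> real^'m^'n) \<times> (real^'n \<Rightarrow> real^'l)
   \<Rightarrow> (real^'n \<Rightarrow> real^'n) \<times> (real^'n \<Rightarrow> real^'m^'n) \<times> (real^'n \<Rightarrow> real^'l)" where
  "proj_PlV Q S sqrtR lm gV fgh =
     (case fgh of (f, g, h) \<Rightarrow>
       ((\<lambda>x. proj_compl (gV x) *v f x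
              + ((h x \<bullet> (Q *v h x) - (norm (lm x))\<^sup>2) / (norm (gV x))\<^sup>2) *\<^sub>R gV x),
        (\<lambda>x. proj_compl (gV x) ** g x
              + (2 / (norm (gV x))\<^sup>2) *\<^sub>R outer_prod (gV x) (h x v* S - lm x v* sqrtR)),
        h))"

definition dissipative ::
  "real^'l^'l \<Rightarrow> real^'m^'l \<Rightarrow> real^'m^'m \<Rightarrow> (real^'n \<Rightarrow> real)
   \<Rightarrow> (real^'n \<Rightarrow> real^'n) \<Rightarrow> (real^'n \<Rightarrow> real^'m^'n) \<Rightarrow> (real^'n \<Rightarrow> real^'l) \<Rightarrow> bool" where
  "dissipative Q S R V f g h \<longleftrightarrow>
     (\<forall>(u :: real \<Rightarrow> real^'m) (x :: real \<Rightarrow> real^'n) t0 t1.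
        t0 \<le> t1
        \<and> (\<forall>t\<in>{t0..t1}. (x has_vector_derivative (f (x t) + g (x t) *v u t)) (at t within {t0..t1}))
        \<and> (\<lambda>s. supply_rate Q S R (u s) (h (x s))) integrable_on {t0..t1}
        \<longrightarrow> V (x t1) - V (x t0) \<le> integral {t0..t1} (\<lambda>s. supply_rate Q S R (u s) (h (x s))))"

end

theory Submission
  imports Defs
begin

text \<open>Since \<open>P\<^sup>C\<^sub>\<nabla>\<^sub>V\<close> annihilates \<open>\<nabla>V\<close>, the projection keeps the components of \<open>f\<close> and
  \<open>g\<close> orthogonal to \<open>\<nabla>V\<close> and prescribes their components along \<open>\<nabla>V\<close> by data not depending
  on \<open>f\<close> or \<open>g\<close>. Hence it is idempotent, its image satisfies the dissipation equalities
  \<open>\<nabla>V\<^sup>T f = h\<^sup>T Q h - \<parallel>l\<parallel>\<^sup>2\<close>, \<open>\<nabla>V\<^sup>T g / 2 = h\<^sup>T S - l\<^sup>T \<surd>R\<close>, and every triple satisfying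
  them is fixed. Along a solution these equalities give, by completing the square,
  \<open>d/dt V(x) = w(u, y) - \<parallel>l + \<surd>R u\<parallel>\<^sup>2 \<le> w(u, y)\<close>, and integrating yields dissipativity.
  For the converse with an arbitrary factorisation \<open>R = W\<^sup>T W\<close>, the equality of Gram
  matrices \<open>W\<^sup>T W = \<surd>R\<^sup>T \<surd>R\<close> allows replacing \<open>\<lambda>\<^sup>T W\<close> by \<open>l\<^sup>T \<surd>R\<close> with \<open>\<parallel>l\<parallel> = \<parallel>\<lambda>\<parallel>\<close>.\<close>

lemma matrix_diff_rdistrib: "(A - B) ** C = A ** C - B ** C"
  for A B :: "'a::ring_1^'n^'m"
  by (simp add: vec_eq_iff matrix_matrix_mult_def sum_subtractf algebra_simps)

lemma inner_mult_vector_self_gram: "(A *v p) \<bullet> (A *v p) = p \<bullet> ((transpose A ** A) *v p)"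
  for A :: "real^'n^'m"
proof -
  have "(A *v p) \<bullet> (A *v p) = (p v* transpose A) \<bullet> (A *v p)"
    by simp
  also have "\<dots> = p \<bullet> ((transpose A ** A) *v p)"
    by (simp only: dot_lmul_matrix matrix_vector_mul_assoc)
  finally show ?thesis .
qed

lemma det_eq_0_iff_ex_kernel: "det A = 0 \<longleftrightarrow> (\<exists>v. v \<noteq> 0 \<and> A *v v = 0)"
  for A :: "real^'n^'n"
  unfolding det_eq_0_rank matrix_nonfull_linear_equations_eq using rank_bound[of A] by linarith

lemma gram_eq_imp_ex_left_kernel:
  fixes W T :: "real^'m^'m"
  assumes gram: "transpose W ** W = transpose T ** T" and "z v* W = 0"
  shows "\<exists>k. k v* T = 0 \<and> norm k = norm z"
proof (cases "z = 0")
  case True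
  then show ?thesis by (intro exI[of _ 0]) simp
next
  case False
  moreover have "transpose W *v z = 0"
    using \<open>z v* W = 0\<close> by simp
  ultimately have "det (transpose W) = 0"
    using det_eq_0_iff_ex_kernel by blast
  then have "det (transpose T ** T) = 0"
    by (simp only: gram[symmetric] det_mul mult_zero_left)
  then have "det (transpose T) = 0"
    by (simp add: det_mul)
  then obtain k0 where "k0 \<noteq> 0" and "k0 v* T = 0"
    using det_eq_0_iff_ex_kernel[of "transpose T"] by auto
  then show ?thesis
    by (intro exI[of _ "(norm z / norm k0) *\<^sub>R k0"]) (simp add: scaleR_vector_matrix_assoc)
qed

lemma gram_eq_imp_ex_vector_matrix_eq:
  fixes W T :: "real^'m^'m" and lam :: "real^'m"
  assumes gram: "transpose W ** W = transpose T ** T"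
  shows "\<exists>mu. mu v* T = lam v* W \<and> norm mu = norm lam"
proof -
  txt \<open>Split \<open>\<lambda> = y + z\<close> with \<open>y = W p\<close> and \<open>z \<bottom> range W\<close>. Then \<open>\<lambda>\<^sup>T W = (T p)\<^sup>T T\<close> with
    \<open>\<parallel>T p\<parallel> = \<parallel>y\<parallel>\<close>, and the missing norm of \<open>z\<close> is supplied by a left null vector of \<open>T\<close>.\<close>
  have span_range: "span (range ((*v) W)) = range ((*v) W)"
    by (simp add: span_linear_image)
  obtain y z where y: "y \<in> range ((*v) W)" and orth: "\<And>w. w \<in> range ((*v) W) \<Longrightarrow> orthogonal z w"
    and lam: "lam = y + z"
    using orthogonal_subspace_decomp_exists[of "range ((*v) W)" lam] unfolding span_range by blast
  then obtain p where p: "y = W *v p" by auto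
  have "(z v* W) \<bullet> (z v* W) = z \<bullet> (W *v (z v* W))" by (simp add: dot_lmul_matrix)
  also have "\<dots> = 0" using orth[of "W *v (z v* W)"] by (simp add: orthogonal_def)
  finally have zW: "z v* W = 0" by simp
  obtain k where k: "k v* T = 0" "norm k = norm z"
    using gram_eq_imp_ex_left_kernel[OF gram zW] by blast
  define mu where "mu = T *v p + k"
  have "mu v* T = (p v* transpose T) v* T" by (simp add: mu_def vector_matrix_left_distrib k)
  also have "\<dots> = y v* W"
    by (metis gram p vector_matrix_mul_assoc vector_transpose_matrix)
  finally have mu_eq: "mu v* T = lam v* W"
    by (simp add: lam vector_matrix_left_distrib zW)
  have "(T *v p) \<bullet> k = p \<bullet> (k v* T)"
    by (metis dot_lmul_matrix inner_commute vector_transpose_matrix)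
  then have "(norm mu)\<^sup>2 = (norm (T *v p))\<^sup>2 + (norm k)\<^sup>2"
    unfolding mu_def by (simp add: norm_add_Pythagorean orthogonal_def k)
  also have "\<dots> = (norm y)\<^sup>2 + (norm z)\<^sup>2"
    by (simp add: power2_norm_eq_inner p inner_mult_vector_self_gram gram k)
  also have "\<dots> = (norm lam)\<^sup>2"
    using orth[OF y] by (simp add: lam norm_add_Pythagorean orthogonal_commute)
  finally have "norm mu = norm lam"
    by simp
  with mu_eq show ?thesis
    by blast
qed

lemma outer_prod_scaleR_right: "outer_prod a (k *\<^sub>R w) = k *\<^sub>R outer_prod a w"
  by (simp add: outer_prod_def vec_eq_iff)

lemma outer_prod_zero_right [simp]: "outer_prod a 0 = 0"
  by (simp add: outer_prod_def vec_eq_iff)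

lemma outer_prod_mult_vector: "outer_prod a b *v v = (b \<bullet> v) *\<^sub>R a"
  by (simp add: outer_prod_def vec_eq_iff matrix_vector_mult_def inner_vec_def sum_distrib_left algebra_simps)

lemma outer_prod_matrix_mult: "outer_prod a b ** G = outer_prod a (b v* G)"
  by (simp add: outer_prod_def vec_eq_iff matrix_matrix_mult_def vector_matrix_mult_def
      sum_distrib_left algebra_simps)

lemma vector_mult_outer_prod: "c v* outer_prod a w = (c \<bullet> a) *\<^sub>R w"
  by (simp add: outer_prod_def vec_eq_iff vector_matrix_mult_def inner_vec_def
      sum_distrib_left sum_distrib_right algebra_simps)

lemma proj_compl_mult_vector: "proj_compl a *v v = v - ((a \<bullet> v) / (norm a)\<^sup>2) *\<^sub>R a"
  by (simp add: proj_compl_def matrix_vector_mult_diff_rdistrib outer_prod_mult_vector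
      scaleR_matrix_vector_assoc[symmetric])

lemma proj_compl_matrix_mult:
  "proj_compl a ** G = G - (1 / (norm a)\<^sup>2) *\<^sub>R outer_prod a (a v* G)"
  by (simp add: proj_compl_def matrix_diff_rdistrib outer_prod_matrix_mult scalar_matrix_assoc[symmetric])

lemma inner_proj_compl: "a \<noteq> 0 \<Longrightarrow> a \<bullet> (proj_compl a *v v) = 0"
  by (simp add: proj_compl_mult_vector inner_diff_right power2_norm_eq_inner)

lemma vector_mult_proj_compl: "a \<noteq> 0 \<Longrightarrow> a v* (proj_compl a ** G) = 0"
  by (simp add: proj_compl_matrix_mult vector_matrix_mult_diff_rdistrib vector_scaleR_matrix_ac
      vector_mult_outer_prod power2_norm_eq_inner)

lemma proj_compl_mult_self: "a \<noteq> 0 \<Longrightarrow> proj_compl a *v a = 0"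
  by (simp add: proj_compl_mult_vector power2_norm_eq_inner)

lemma proj_compl_mult_outer_prod: "a \<noteq> 0 \<Longrightarrow> proj_compl a ** outer_prod a w = 0"
  by (simp add: proj_compl_matrix_mult vector_mult_outer_prod outer_prod_scaleR_right power2_norm_eq_inner)

lemma proj_compl_idem_vector: "a \<noteq> 0 \<Longrightarrow> proj_compl a *v (proj_compl a *v v) = proj_compl a *v v"
  by (subst (1) proj_compl_mult_vector) (simp add: inner_proj_compl)

lemma proj_compl_idem_matrix: "a \<noteq> 0 \<Longrightarrow> proj_compl a ** (proj_compl a ** G) = proj_compl a ** G"
  by (subst (1) proj_compl_matrix_mult) (simp add: vector_mult_proj_compl)

lemma proj_compl_decomp_vector:
  "proj_compl a *v v + ((a \<bullet> v) / (norm a)\<^sup>2) *\<^sub>R a = v"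
  by (simp add: proj_compl_mult_vector)

lemma proj_compl_decomp_matrix:
  "proj_compl a ** G + (1 / (norm a)\<^sup>2) *\<^sub>R outer_prod a (a v* G) = G"
  by (simp add: proj_compl_matrix_mult)

lemma supply_rate_completion_of_squares:
  assumes "transpose T ** T = R"
  shows "supply_rate Q S R u y
    = y \<bullet> (Q *v y) - (norm l)\<^sup>2 + 2 * ((y v* S - l v* T) \<bullet> u) + (norm (l + T *v u))\<^sup>2"
proof -
  have "(norm (l + T *v u))\<^sup>2 = (norm l)\<^sup>2 + 2 * (l \<bullet> (T *v u)) + (T *v u) \<bullet> (T *v u)"
    by (simp add: power2_norm_eq_inner inner_add_left inner_add_right inner_commute)
  moreover have "(y v* S - l v* T) \<bullet> u = y \<bullet> (S *v u) - l \<bullet> (T *v u)"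
    by (simp add: inner_diff_left dot_lmul_matrix)
  moreover have "u \<bullet> (R *v u) = (T *v u) \<bullet> (T *v u)"
    by (simp add: inner_mult_vector_self_gram assms)
  ultimately show ?thesis
    by (simp add: supply_rate_def)
qed

lemma dissipative_if_storage_derivative_le:
  fixes f :: "real^'n \<Rightarrow> real^'n" and g :: "real^'n \<Rightarrow> real^'m^'n"
  assumes V_grad: "\<And>x. (V has_derivative (\<lambda>v. gV x \<bullet> v)) (at x)"
    and deriv_le: "\<And>x u. gV x \<bullet> (f x + g x *v u) \<le> supply_rate Q S R u (h x)"
  shows "dissipative Q S R V f g h"
  unfolding dissipative_def
proof (intro allI impI, elim conjE)
  fix u :: "real \<Rightarrow> real^'m" and x :: "real \<Rightarrow> real^'n" and t0 t1 :: real
  assume "t0 \<le> t1"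
    and x_deriv: "\<forall>t\<in>{t0..t1}.
      (x has_vector_derivative (f (x t) + g (x t) *v u t)) (at t within {t0..t1})"
    and supply_integrable: "(\<lambda>s. supply_rate Q S R (u s) (h (x s))) integrable_on {t0..t1}"
  let ?dV = "\<lambda>t. gV (x t) \<bullet> (f (x t) + g (x t) *v u t)"
  have V_deriv: "((V \<circ> x) has_vector_derivative ?dV t) (at t within {t0..t1})"
    if "t \<in> {t0..t1}" for t
  proof -
    have "(x has_derivative (\<lambda>s. s *\<^sub>R (f (x t) + g (x t) *v u t))) (at t within {t0..t1})"
      using x_deriv that by (simp add: has_vector_derivative_def)
    moreover have "(V has_derivative (\<lambda>v. gV (x t) \<bullet> v)) (at (x t) within x ` {t0..t1})"
      using V_grad has_derivative_at_withinI by blast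
    ultimately have "((V \<circ> x) has_derivative
        (\<lambda>v. gV (x t) \<bullet> v) \<circ> (\<lambda>s. s *\<^sub>R (f (x t) + g (x t) *v u t))) (at t within {t0..t1})"
      by (rule diff_chain_within)
    then show ?thesis
      by (simp add: has_vector_derivative_def o_def mult.commute)
  qed
  have ftc: "(?dV has_integral V (x t1) - V (x t0)) {t0..t1}"
    using fundamental_theorem_of_calculus[OF \<open>t0 \<le> t1\<close> V_deriv] by (simp only: comp_apply)
  show "V (x t1) - V (x t0) \<le> integral {t0..t1} (\<lambda>s. supply_rate Q S R (u s) (h (x s)))"
  proof (rule has_integral_le[OF ftc integrable_integral[OF supply_integrable]])
    show "?dV s \<le> supply_rate Q S R (u s) (h (x s))" for s
      using deriv_le[of "x s" "u s"] .
  qed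
qed

text \<open>The dissipation equalities, with a state-dependent factor \<open>W\<close> in place of \<open>\<surd>R\<close>.\<close>

definition hill_moylan ::
  "real^'l^'l \<Rightarrow> real^'m^'l \<Rightarrow> (real^'n \<Rightarrow> real^'n) \<Rightarrow> (real^'n \<Rightarrow> real^'m)
   \<Rightarrow> (real^'n \<Rightarrow> real^'m^'m) \<Rightarrow> (real^'n \<Rightarrow> real^'n) \<Rightarrow> (real^'n \<Rightarrow> real^'m^'n)
   \<Rightarrow> (real^'n \<Rightarrow> real^'l) \<Rightarrow> bool" where
  "hill_moylan Q S gV l W f g h \<longleftrightarrow>
     (\<forall>x. gV x \<bullet> f x = h x \<bullet> (Q *v h x) - (norm (l x))\<^sup>2)
   \<and> (\<forall>x. (1/2) *\<^sub>R (gV x v* g x) = h x v* S - l x v* W x)"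

lemma dissipative_if_hill_moylan:
  assumes V_grad: "\<And>x. (V has_derivative (\<lambda>v. gV x \<bullet> v)) (at x)"
    and factor: "\<And>x. transpose (W x) ** W x = R"
    and "hill_moylan Q S gV l W f g h"
  shows "dissipative Q S R V f g h"
proof (rule dissipative_if_storage_derivative_le[OF V_grad])
  fix x u
  have "gV x v* g x = 2 *\<^sub>R ((1/2) *\<^sub>R (gV x v* g x))"
    by simp
  also have "\<dots> = 2 *\<^sub>R (h x v* S - l x v* W x)"
    using \<open>hill_moylan Q S gV l W f g h\<close> by (simp add: hill_moylan_def)
  finally have g_eq: "gV x v* g x = 2 *\<^sub>R (h x v* S - l x v* W x)" .
  have "gV x \<bullet> (f x + g x *v u) = gV x \<bullet> f x + (gV x v* g x) \<bullet> u"
    by (simp add: inner_add_right dot_lmul_matrix)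
  also have "\<dots> = h x \<bullet> (Q *v h x) - (norm (l x))\<^sup>2 + 2 * ((h x v* S - l x v* W x) \<bullet> u)"
    using \<open>hill_moylan Q S gV l W f g h\<close> by (simp add: hill_moylan_def g_eq)
  also have "\<dots> \<le> supply_rate Q S R u (h x)"
    using supply_rate_completion_of_squares[OF factor[of x], of Q S u "h x" "l x"] by simp
  finally show "gV x \<bullet> (f x + g x *v u) \<le> supply_rate Q S R u (h x)" .
qed

lemma hill_moylan_change_factor:
  assumes gram: "\<And>x. transpose (W x) ** W x = transpose T ** T"
    and "hill_moylan Q S gV lam W f g h"
  obtains l where "hill_moylan Q S gV l (\<lambda>_. T) f g h"
proof -
  have "\<forall>x. \<exists>mu. mu v* T = lam x v* W x \<and> norm mu = norm (lam x)"
    using gram_eq_imp_ex_vector_matrix_eq[OF gram] by blast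
  then have "\<exists>l. \<forall>x. l x v* T = lam x v* W x \<and> norm (l x) = norm (lam x)"
    by (rule choice)
  then obtain l where "\<forall>x. l x v* T = lam x v* W x \<and> norm (l x) = norm (lam x)" ..
  with \<open>hill_moylan Q S gV lam W f g h\<close> show thesis
    by (intro that[of l]) (simp add: hill_moylan_def)
qed

lemma proj_PlV_idem:
  fixes Q :: "real^'l^'l" and S :: "real^'m^'l" and gV :: "real^'n \<Rightarrow> real^'n"
  assumes "\<And>x. gV x \<noteq> 0"
  shows "proj_PlV Q S T l gV \<circ> proj_PlV Q S T l gV = proj_PlV Q S T l gV"
proof
  fix fgh
  show "(proj_PlV Q S T l gV \<circ> proj_PlV Q S T l gV) fgh = proj_PlV Q S T l gV fgh"
    using assms by (cases fgh) (simp add: proj_PlV_def matrix_vector_right_distrib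
        matrix_add_ldistrib matrix_vector_mult_scaleR matrix_scalar_ac scalar_matrix_assoc[symmetric]
        proj_compl_idem_vector proj_compl_idem_matrix proj_compl_mult_self proj_compl_mult_outer_prod)
qed

lemma hill_moylan_proj_PlV:
  assumes "\<And>x. gV x \<noteq> 0" and "proj_PlV Q S T l gV (f, g, h) = (f', g', h')"
  shows "hill_moylan Q S gV l (\<lambda>_. T) f' g' h"
  using assms by (auto simp: proj_PlV_def hill_moylan_def inner_add_right inner_proj_compl
      vector_matrix_mult_add_rdistrib vector_mult_proj_compl vector_scaleR_matrix_ac
      vector_mult_outer_prod power2_norm_eq_inner)

lemma proj_PlV_eq_self:
  assumes "\<And>x. gV x \<noteq> 0" and "hill_moylan Q S gV l (\<lambda>_. T) f g h"
  shows "proj_PlV Q S T l gV (f, g, h) = (f, g, h)"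
proof -
  have "h x v* S - l x v* T = (1/2) *\<^sub>R (gV x v* g x)" for x
    using assms(2) by (simp add: hill_moylan_def)
  moreover have "h x \<bullet> (Q *v h x) - (norm (l x))\<^sup>2 = gV x \<bullet> f x" for x
    using assms(2) by (simp add: hill_moylan_def)
  ultimately show ?thesis
    by (simp add: proj_PlV_def fun_eq_iff outer_prod_scaleR_right proj_compl_decomp_vector
        proj_compl_decomp_matrix[simplified])
qed

lemma dissipative_proj_PlV:
  assumes V_grad: "\<And>x. (V has_derivative (\<lambda>v. gV x \<bullet> v)) (at x)"
    and "\<And>x. gV x \<noteq> 0" and "transpose T ** T = R"
    and proj: "proj_PlV Q S T l gV (f, g, h) = (f', g', h')"
  shows "dissipative Q S R V f' g' h'"
proof -
  have "hill_moylan Q S gV l (\<lambda>_. T) f' g' h"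
    using assms(2) proj by (rule hill_moylan_proj_PlV)
  moreover have "h' = h"
    using proj by (simp add: proj_PlV_def)
  ultimately show ?thesis
    using dissipative_if_hill_moylan[OF V_grad \<open>transpose T ** T = R\<close>] by simp
qed

lemma ex_proj_PlV_eq_self:
  assumes "\<And>x. gV x \<noteq> 0" and "\<And>x. transpose (W x) ** W x = transpose T ** T"
    and "hill_moylan Q S gV lam W f g h"
  shows "\<exists>l. (f, g, h) = proj_PlV Q S T l gV (f, g, h)"
proof -
  obtain l where "hill_moylan Q S gV l (\<lambda>_. T) f g h"
    using assms(2,3) by (rule hill_moylan_change_factor)
  then have "proj_PlV Q S T l gV (f, g, h) = (f, g, h)"
    using assms(1) proj_PlV_eq_self by blast
  then show ?thesis
    by (intro exI[of _ l]) simp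
qed

theorem theorem1:
  fixes Q :: "real^'l^'l" and S :: "real^'m^'l" and R :: "real^'m^'m" and sqrtR :: "real^'m^'m"
    and lm :: "real^'n \<Rightarrow> real^'m"
    and V :: "real^'n \<Rightarrow> real" and gV :: "real^'n \<Rightarrow> real^'n"
  assumes Q_sym: "transpose Q = Q"
    and R_sym: "transpose R = R" and R_psd: "psd_mat R"
    and sqrtR_sym: "transpose sqrtR = sqrtR" and sqrtR_psd: "psd_mat sqrtR"
    and sqrtR_sq: "sqrtR ** sqrtR = R"
    and V_nonneg: "\<And>x. 0 \<le> V x"
    and V_grad: "\<And>x. (V has_derivative (\<lambda>v. gV x \<bullet> v)) (at x)"
    and gV_nz: "\<And>x. gV x \<noteq> 0"
  shows
    "proj_PlV Q S sqrtR lm gV \<circ> proj_PlV Q S sqrtR lm gV = proj_PlV Q S sqrtR lm gV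
     \<and> (\<forall>f g h fd gd hd. proj_PlV Q S sqrtR lm gV (f, g, h) = (fd, gd, hd) \<longrightarrow>
          (\<forall>x. gV x \<bullet> fd x = h x \<bullet> (Q *v h x) - (norm (lm x))\<^sup>2)
        \<and> (\<forall>x. (1/2) *\<^sub>R (gV x v* gd x) = h x v* S - lm x v* sqrtR)
        \<and> dissipative Q S R V fd gd hd)
     \<and> (\<forall>(f :: real^'n \<Rightarrow> real^'n) (g :: real^'n \<Rightarrow> real^'m^'n) (h :: real^'n \<Rightarrow> real^'l)
          (lam :: real^'n \<Rightarrow> real^'m) (W :: real^'n \<Rightarrow> real^'m^'m).
          (\<forall>x. gV x \<bullet> f x = h x \<bullet> (Q *v h x) - (norm (lam x))\<^sup>2)
        \<and> (\<forall>x. (1/2) *\<^sub>R (gV x v* g x) = h x v* S - lam x v* W x)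
        \<and> (\<forall>x. transpose (W x) ** W x = R)
        \<longrightarrow> (\<exists>lt. (f, g, h) = proj_PlV Q S sqrtR lt gV (f, g, h)))"
proof -
  have sqrtR_gram: "transpose sqrtR ** sqrtR = R"
    by (simp add: sqrtR_sym sqrtR_sq)
  have projected: "hill_moylan Q S gV lm (\<lambda>_. sqrtR) fd gd h \<and> dissipative Q S R V fd gd hd"
    if "proj_PlV Q S sqrtR lm gV (f, g, h) = (fd, gd, hd)" for f g h fd gd hd
    using hill_moylan_proj_PlV[OF gV_nz that] dissipative_proj_PlV[OF V_grad gV_nz sqrtR_gram that] ..
  have converse: "\<exists>lt. (f, g, h) = proj_PlV Q S sqrtR lt gV (f, g, h)"
    if "hill_moylan Q S gV lam W f g h" and "\<forall>x. transpose (W x) ** W x = R" for f g h lam W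
    using ex_proj_PlV_eq_self[OF gV_nz _ that(1)] that(2) by (simp add: sqrtR_gram)
  show ?thesis
    using proj_PlV_idem[where gV = gV and Q = Q and S = S and T = sqrtR and l = lm, OF gV_nz]
      projected[unfolded hill_moylan_def] converse[unfolded hill_moylan_def]
    by (intro conjI allI impI) blast+
qed

end
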